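(* Let $M\ge2$, let $\pi^\star$ lie in the interior of the simplex $\Delta_M$, and define $V:\mathbb R^{M-1}\to\mathbb R$ by $V(S)=\log\big(1+\sum_{k=1}^{M-1}e^{S^{(k)}}\big)-\langle S,\pi^\star_{-M}\rangle$, so that $\nabla V(S)=\pi_{-M}(S)-\pi^\star_{-M}$. Then there exist $c_\infty>0$ and $R<\infty$ such that $\|\nabla V(S)\|\ge c_\infty$ for all $S\notin C_R:=\{S:V(S)\le R\}$. Moreover such a $c_\infty$ can be chosen with $c_\infty\le\mathrm{dist}(\pi^\star,\partial\Delta_M)$, and in particular with $c_\infty\le\min_{1\le j\le M}\pi^\star_j$.
   Context: $\pi^\star_{-M}=(\pi^\star_1,\dots,\pi^\star_{M-1})$. $\pi(S)$ is the softmax map $\pi_k(S)=e^{S^{(k)}}/(1+\sum_{j=1}^{M-1}e^{S^{(j)}})$ for $k\le M-1$, $\pi_M(S)=1/(1+\sum_{j=1}^{M-1}e^{S^{(j)}})$, and $\pi_{-M}(S)=(\pi_1(S),\dots,\pi_{M-1}(S))$. $\partial\Delta_M$ is the relative boundary of the simplex. *)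

theory Defs
  imports "HOL-Analysis.Analysis"
begin

text \<open>Vectors of R^(M-1) are represented as functions nat => real, of which only
the coordinates 1..M-1 matter; points of R^M (e.g. pi-star) use coordinates 1..M.\<close>

definition simplex_set :: "nat \<Rightarrow> (nat \<Rightarrow> real) set" where
  "simplex_set M = {p. (\<forall>j\<in>{1..M}. 0 \<le> p j) \<and> (\<Sum>j=1..M. p j) = 1}"

definition simplex_interior :: "nat \<Rightarrow> (nat \<Rightarrow> real) set" where
  "simplex_interior M = {p. (\<forall>j\<in>{1..M}. 0 < p j) \<and> (\<Sum>j=1..M. p j) = 1}"

definition simplex_boundary :: "nat \<Rightarrow> (nat \<Rightarrow> real) set" where
  "simplex_boundary M = {p \<in> simplex_set M. \<exists>j\<in>{1..M}. p j = 0}"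

definition edist :: "nat \<Rightarrow> (nat \<Rightarrow> real) \<Rightarrow> (nat \<Rightarrow> real) \<Rightarrow> real" where
  "edist n p q = sqrt (\<Sum>j=1..n. (p j - q j)\<^sup>2)"

definition setdist_pt :: "nat \<Rightarrow> (nat \<Rightarrow> real) \<Rightarrow> (nat \<Rightarrow> real) set \<Rightarrow> real" where
  "setdist_pt n p A = (INF q\<in>A. edist n p q)"

definition enorm :: "nat \<Rightarrow> (nat \<Rightarrow> real) \<Rightarrow> real" where
  "enorm n v = sqrt (\<Sum>k=1..n. (v k)\<^sup>2)"

definition softmax :: "nat \<Rightarrow> (nat \<Rightarrow> real) \<Rightarrow> nat \<Rightarrow> real" where
  "softmax M S k = (if k = M then 1 / (1 + (\<Sum>j=1..M-1. exp (S j)))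
                    else exp (S k) / (1 + (\<Sum>j=1..M-1. exp (S j))))"

definition Vfun :: "nat \<Rightarrow> (nat \<Rightarrow> real) \<Rightarrow> (nat \<Rightarrow> real) \<Rightarrow> real" where
  "Vfun M pstar S = ln (1 + (\<Sum>k=1..M-1. exp (S k))) - (\<Sum>k=1..M-1. S k * pstar k)"

definition gradV :: "nat \<Rightarrow> (nat \<Rightarrow> real) \<Rightarrow> (nat \<Rightarrow> real) \<Rightarrow> nat \<Rightarrow> real" where
  "gradV M pstar S k = softmax M S k - pstar k"

end

theory Submission
  imports Defs
begin

text \<open>Writing \<pi> for the softmax map, V is the cross entropy V(S) = - \<Sum>_j \<pi>*_j ln \<pi>_j(S).
  If the gradient \<pi>_{-M}(S) - \<pi>*_{-M} is small, then so is the missing last coordinate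
  \<pi>_M(S) - \<pi>*_M, because both vectors sum to one. Hence every \<pi>_j(S) is at least half of
  m = min_j \<pi>*_j, and V(S) \<le> ln (2/m). So outside {V \<le> ln (2/m)} the gradient has norm at
  least m/(2M) \<le> m, and m is a lower bound for the distance from \<pi>* to the boundary, on
  which some coordinate vanishes.\<close>

lemma abs_le_enorm: "k \<in> {1..n} \<Longrightarrow> \<bar>v k\<bar> \<le> enorm n v"
proof -
  assume k: "k \<in> {1..n}"
  have "\<bar>v k\<bar> = sqrt ((v k)\<^sup>2)" by simp
  also have "\<dots> \<le> sqrt (\<Sum>k=1..n. (v k)\<^sup>2)"
    by (rule real_sqrt_le_mono, rule member_le_sum[OF k]) auto
  finally show ?thesis unfolding enorm_def .
qed

lemma abs_le_edist: "k \<in> {1..n} \<Longrightarrow> \<bar>p k - q k\<bar> \<le> edist n p q"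
  using abs_le_enorm[of k n "\<lambda>j. p j - q j"] by (simp add: enorm_def edist_def)

lemma sum_atLeastAtMost_split_last:
  fixes f :: "nat \<Rightarrow> 'a::comm_monoid_add"
  assumes "M \<ge> 1"
  shows "(\<Sum>j=1..M. f j) = (\<Sum>j=1..M-1. f j) + f M"
proof -
  have "{1..M} = insert M {1..M-1}" and "M \<notin> {1..M-1}" using assms by auto
  then show ?thesis by (simp add: add.commute)
qed

lemma abs_last_diff_le_sum_abs_diff:
  fixes p q :: "nat \<Rightarrow> real"
  assumes "M \<ge> 1" and "(\<Sum>j=1..M. p j) = 1" and "(\<Sum>j=1..M. q j) = 1"
  shows "\<bar>p M - q M\<bar> \<le> (\<Sum>k=1..M-1. \<bar>p k - q k\<bar>)"
proof -
  have "(\<Sum>j=1..M-1. p j) + p M = (\<Sum>j=1..M-1. q j) + q M"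
    using assms by (simp only: sum_atLeastAtMost_split_last[symmetric])
  then have "p M - q M = (\<Sum>k=1..M-1. q k - p k)" by (simp add: sum_subtractf)
  also have "\<bar>\<dots>\<bar> \<le> (\<Sum>k=1..M-1. \<bar>q k - p k\<bar>)" by (rule sum_abs)
  finally show ?thesis by (simp add: abs_minus_commute)
qed

lemma cross_entropy_le_ln_inverse:
  fixes p q :: "'a \<Rightarrow> real"
  assumes "\<And>j. j \<in> A \<Longrightarrow> 0 \<le> p j" and "sum p A = 1"
    and "a > 0" and "\<And>j. j \<in> A \<Longrightarrow> a \<le> q j"
  shows "- (\<Sum>j\<in>A. p j * ln (q j)) \<le> ln (1 / a)"
proof -
  have "(\<Sum>j\<in>A. p j * ln a) \<le> (\<Sum>j\<in>A. p j * ln (q j))"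
    using assms by (intro sum_mono mult_left_mono ln_mono) auto
  moreover have "(\<Sum>j\<in>A. p j * ln a) = ln a"
    using assms(2) by (simp add: sum_distrib_right[symmetric])
  ultimately show ?thesis using assms(3) by (simp add: ln_div)
qed

lemma softmax_last: "softmax M S M = 1 / (1 + (\<Sum>j=1..M-1. exp (S j)))"
  by (simp add: softmax_def)

lemma softmax_nonlast:
  "k \<in> {1..M-1} \<Longrightarrow> softmax M S k = exp (S k) / (1 + (\<Sum>j=1..M-1. exp (S j)))"
  by (auto simp: softmax_def)

lemma sum_softmax:
  assumes "M \<ge> 1"
  shows "(\<Sum>j=1..M. softmax M S j) = 1"
proof -
  define D where "D = 1 + (\<Sum>j=1..M-1. exp (S j))"
  have "D > 0" unfolding D_def by (simp add: add_pos_nonneg sum_nonneg)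
  have "(\<Sum>j=1..M-1. softmax M S j) = (\<Sum>j=1..M-1. exp (S j) / D)"
    by (rule sum.cong) (simp_all only: softmax_nonlast D_def)
  also have "\<dots> = (D - 1) / D" by (simp add: D_def sum_divide_distrib[symmetric])
  finally show ?thesis
    unfolding sum_atLeastAtMost_split_last[OF assms] softmax_last D_def[symmetric]
    using \<open>D > 0\<close> by (simp add: field_simps)
qed

lemma Vfun_eq_cross_entropy:
  assumes "M \<ge> 1" and "(\<Sum>j=1..M. pstar j) = 1"
  shows "Vfun M pstar S = - (\<Sum>j=1..M. pstar j * ln (softmax M S j))"
proof -
  define D where "D = 1 + (\<Sum>j=1..M-1. exp (S j))"
  have "D > 0" unfolding D_def by (simp add: add_pos_nonneg sum_nonneg)
  have "(\<Sum>k=1..M-1. pstar k * ln (softmax M S k))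
        = (\<Sum>k=1..M-1. pstar k * S k - pstar k * ln D)"
  proof (rule sum.cong)
    fix k assume "k \<in> {1..M-1}"
    then have "softmax M S k = exp (S k) / D" by (simp only: softmax_nonlast D_def)
    then show "pstar k * ln (softmax M S k) = pstar k * S k - pstar k * ln D"
      using \<open>D > 0\<close> by (simp add: ln_div right_diff_distrib)
  qed simp
  also have "\<dots> = (\<Sum>k=1..M-1. pstar k * S k) - (1 - pstar M) * ln D"
    using assms(2) unfolding sum_atLeastAtMost_split_last[OF assms(1)]
    by (simp add: sum_subtractf sum_distrib_right[symmetric])
  finally have "(\<Sum>j=1..M. pstar j * ln (softmax M S j)) = (\<Sum>k=1..M-1. pstar k * S k) - ln D"
    unfolding sum_atLeastAtMost_split_last[OF assms(1)] softmax_last D_def[symmetric]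
    using \<open>D > 0\<close> by (simp add: ln_div algebra_simps)
  then show ?thesis unfolding Vfun_def D_def by (simp add: mult.commute)
qed

lemma abs_softmax_diff_le_gradV:
  assumes "M \<ge> 2" and "(\<Sum>j=1..M. pstar j) = 1" and "k \<in> {1..M}"
  shows "\<bar>softmax M S k - pstar k\<bar> \<le> (real M - 1) * enorm (M - 1) (gradV M pstar S)"
proof -
  let ?g = "enorm (M - 1) (gradV M pstar S)"
  have coord: "\<bar>softmax M S i - pstar i\<bar> \<le> ?g" if "i \<in> {1..M-1}" for i
    using abs_le_enorm[OF that, of "gradV M pstar S"] unfolding gradV_def[of M pstar S i] .
  show ?thesis
  proof (cases "k = M")
    case True
    have "\<bar>softmax M S M - pstar M\<bar> \<le> (\<Sum>i=1..M-1. \<bar>softmax M S i - pstar i\<bar>)"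
      using assms by (intro abs_last_diff_le_sum_abs_diff sum_softmax) auto
    also have "\<dots> \<le> real (card {1..M-1}) * ?g" by (rule sum_bounded_above) (use coord in auto)
    also have "\<dots> = (real M - 1) * ?g" using assms(1) by simp
    finally show ?thesis using True by simp
  next
    case False
    then have "\<bar>softmax M S k - pstar k\<bar> \<le> ?g" using assms(3) by (intro coord) auto
    also have "?g \<le> (real M - 1) * ?g"
    proof -
      have "1 \<le> real M - 1" and "?g \<ge> 0" using assms(1) by (simp_all add: enorm_def sum_nonneg)
      from mult_right_mono[OF this] show ?thesis by simp
    qed
    finally show ?thesis .
  qed
qed

lemma Min_interior_pos:
  assumes "M \<ge> 1" and "pstar \<in> simplex_interior M"
  shows "Min (pstar ` {1..M}) > 0"
  using assms by (subst Min_gr_iff) (auto simp: simplex_interior_def)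

lemma Min_le_setdist_simplex_boundary:
  assumes "M \<ge> 2" and "pstar \<in> simplex_interior M"
  shows "Min (pstar ` {1..M}) \<le> setdist_pt M pstar (simplex_boundary M)"
  unfolding setdist_pt_def
proof (rule cINF_greatest)
  let ?e1 = "\<lambda>j::nat. if j = 1 then 1 else (0::real)"
  have "(\<Sum>j=1..M. ?e1 j) = 1" using assms(1) by simp
  then have "?e1 \<in> simplex_boundary M" using assms(1)
    by (auto simp: simplex_boundary_def simplex_set_def intro!: bexI[of _ M])
  then show "simplex_boundary M \<noteq> {}" by blast
next
  fix q assume "q \<in> simplex_boundary M"
  then obtain j where j: "j \<in> {1..M}" "q j = 0" by (auto simp: simplex_boundary_def)
  have "Min (pstar ` {1..M}) \<le> pstar j" using j(1) by simp
  also have "\<dots> = \<bar>pstar j - q j\<bar>" using assms(2) j by (force simp: simplex_interior_def)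
  also have "\<dots> \<le> edist M pstar q" by (rule abs_le_edist[OF j(1)])
  finally show "Min (pstar ` {1..M}) \<le> edist M pstar q" .
qed

lemma softmax_ge_half_Min_of_small_gradV:
  assumes "M \<ge> 2" and "pstar \<in> simplex_interior M"
    and small: "enorm (M - 1) (gradV M pstar S) < Min (pstar ` {1..M}) / (2 * real M)"
    and j: "j \<in> {1..M}"
  shows "Min (pstar ` {1..M}) / 2 \<le> softmax M S j"
proof -
  define m where "m = Min (pstar ` {1..M})"
  have "m > 0" unfolding m_def using assms(1,2) by (intro Min_interior_pos) auto
  have sum1: "(\<Sum>j=1..M. pstar j) = 1" using assms(2) by (simp add: simplex_interior_def)
  have "\<bar>softmax M S j - pstar j\<bar> \<le> (real M - 1) * enorm (M - 1) (gradV M pstar S)"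
    by (rule abs_softmax_diff_le_gradV[OF assms(1) sum1 j])
  also have "\<dots> \<le> (real M - 1) * (m / (2 * real M))"
    using assms(1) small unfolding m_def by (intro mult_left_mono) auto
  also have "\<dots> \<le> m / 2" using \<open>m > 0\<close> assms(1) by (simp add: field_simps)
  finally have "pstar j - m / 2 \<le> softmax M S j" by linarith
  moreover have "m \<le> pstar j" unfolding m_def using j by simp
  ultimately show ?thesis unfolding m_def by linarith
qed

lemma Vfun_le_of_small_gradV:
  assumes "M \<ge> 2" and "pstar \<in> simplex_interior M"
    and "enorm (M - 1) (gradV M pstar S) < Min (pstar ` {1..M}) / (2 * real M)"
  shows "Vfun M pstar S \<le> ln (2 / Min (pstar ` {1..M}))"
proof -
  have sum1: "(\<Sum>j=1..M. pstar j) = 1" and nonneg: "\<And>j. j \<in> {1..M} \<Longrightarrow> 0 \<le> pstar j"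
    using assms(2) by (auto simp: simplex_interior_def less_imp_le)
  have "- (\<Sum>j=1..M. pstar j * ln (softmax M S j)) \<le> ln (1 / (Min (pstar ` {1..M}) / 2))"
    using assms Min_interior_pos[of M pstar]
    by (intro cross_entropy_le_ln_inverse nonneg sum1 softmax_ge_half_Min_of_small_gradV) auto
  then show ?thesis using assms(1) sum1 by (simp add: Vfun_eq_cross_entropy)
qed

theorem lemma3:
  fixes M :: nat and pstar :: "nat \<Rightarrow> real"
  assumes "M \<ge> 2"
    and "pstar \<in> simplex_interior M"
  shows "\<exists>c R. c > 0 \<and>
           (\<forall>S. \<not> (Vfun M pstar S \<le> R) \<longrightarrow> enorm (M - 1) (gradV M pstar S) \<ge> c) \<and>
           c \<le> setdist_pt M pstar (simplex_boundary M) \<and>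
           c \<le> Min (pstar ` {1..M})"
proof (intro exI conjI allI impI)
  let ?m = "Min (pstar ` {1..M})"
  have "?m > 0" using assms by (intro Min_interior_pos) auto
  then show "?m / (2 * real M) > 0" using assms(1) by simp
  have "x / (2 * real M) \<le> x" if "x > 0" for x :: real
    using that assms(1) by (simp add: field_simps)
  then show "?m / (2 * real M) \<le> ?m" using \<open>?m > 0\<close> .
  also have "?m \<le> setdist_pt M pstar (simplex_boundary M)"
    using assms by (rule Min_le_setdist_simplex_boundary)
  finally show "?m / (2 * real M) \<le> setdist_pt M pstar (simplex_boundary M)" .
  fix S assume "\<not> Vfun M pstar S \<le> ln (2 / ?m)"
  then show "?m / (2 * real M) \<le> enorm (M - 1) (gradV M pstar S)"
    using Vfun_le_of_small_gradV[OF assms, of S] by (meson not_le)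
qed

end
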